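(* Let $N\in\mathbb N_0$, $0<\pi_1,\dots,\pi_p<1$ pairwise distinct, $\vec n\in\mathbb N_0^p$ with $|\vec n|\le N$. Let $\mathcal C^*$ be a positively oriented (counterclockwise) simple closed contour enclosing the origin exactly once. Then for $x\in\{0,\dots,N\}$ $$K^{(\mathrm{II})}_{\vec n}(x;\vec\pi,N)=\frac{\prod_{j=1}^p(1-\pi_j)^{n_j}}{(N-|\vec n|)!}\Gamma(x+1)\Gamma(N-x+1)\int_{\mathcal C^*}\frac{(1+s)^{N-|\vec n|}}{s^{x+1}}\prod_{j=1}^p\Big(s-\frac{\pi_j}{1-\pi_j}\Big)^{n_j}\frac{ds}{2\pi i}.$$
   Context: Kravchuk weights $w_i(x)=\binom Nx\pi_i^x(1-\pi_i)^{N-x}$ on $\{0,\dots,N\}$. $K^{(\mathrm{II})}_{\vec n}$ is the monic polynomial of degree $|\vec n|$ with $\sum_{k=0}^Nk^jK^{(\mathrm{II})}_{\vec n}(k)w_i(k)=0$ for $0\le j\le n_i-1$, $1\le i\le p$. *)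

theory Defs
  imports "HOL-Complex_Analysis.Complex_Analysis" "HOL-Computational_Algebra.Polynomial"
begin

definition kravchuk_weight :: "nat \<Rightarrow> real \<Rightarrow> nat \<Rightarrow> real" where
  "kravchuk_weight N pr x = real (N choose x) * pr ^ x * (1 - pr) ^ (N - x)"

definition is_kravchuk_II :: "nat \<Rightarrow> (nat \<Rightarrow> real) \<Rightarrow> nat \<Rightarrow> (nat \<Rightarrow> nat) \<Rightarrow> real poly \<Rightarrow> bool" where
  "is_kravchuk_II p pr N n P \<longleftrightarrow>
     degree P = (\<Sum>i<p. n i) \<and> lead_coeff P = 1 \<and>
     (\<forall>i<p. \<forall>j<n i. (\<Sum>k=0..N. real k ^ j * poly P (real k) * kravchuk_weight N (pr i) k) = 0)"

definition kravchuk_II :: "nat \<Rightarrow> (nat \<Rightarrow> real) \<Rightarrow> nat \<Rightarrow> (nat \<Rightarrow> nat) \<Rightarrow> real poly" where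
  "kravchuk_II p pr N n = (THE P. is_kravchuk_II p pr N n P)"

end

theory Submission
  imports Defs
begin

text \<open>
  With \<open>a\<^sub>j = \<pi>\<^sub>j / (1 - \<pi>\<^sub>j)\<close> and \<open>F(s) = (1 + s)\<^bsup>N-|n|\<^esup> \<Prod>\<^sub>j (s - a\<^sub>j)\<^bsup>n\<^sub>j\<^esup>\<close>, the contour integral
  is the coefficient of \<open>s\<^sup>x\<close> in \<open>F\<close>, so one has to show that the type II polynomial takes the
  values \<open>c x! (N-x)! / (N-|n|)! [s\<^sup>x] F\<close> on \<open>{0..N}\<close>, where \<open>c = \<Prod>\<^sub>j (1 - \<pi>\<^sub>j)\<^bsup>n\<^sub>j\<^esup>\<close>.

  Everything rests on the generating function \<open>G\<^sub>R(s) = \<Sum>\<^sub>k R(k) (N choose k) s\<^sup>k\<close> of a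
  polynomial \<open>R\<close>: with the Euler operator \<open>\<theta> = s d/ds\<close> one has
  \<open>\<Sum>\<^sub>k k\<^sup>j R(k) w\<^sub>i(k) = (1 - \<pi>\<^sub>i)\<^sup>N (\<theta>\<^sup>j G\<^sub>R)(a\<^sub>i)\<close>, and for \<open>a \<noteq> 0\<close> the values
  \<open>(\<theta>\<^sup>j G)(a)\<close>, \<open>j < m\<close>, all vanish iff \<open>(s - a)\<^sup>m\<close> divides \<open>G\<close>. The orthogonality conditions
  thus say that \<open>G\<^sub>R\<close> has a root of order \<open>n\<^sub>i\<close> at every \<open>a\<^sub>i\<close>.

  An explicit polynomial of degree \<open>|n|\<close>, built from falling factorials, has \<open>G\<^sub>R = c N!/(N-|n|)! F\<close>
  and is therefore of type II. Conversely the difference \<open>R\<close> of two type II polynomials has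
  degree below \<open>|n|\<close>, so \<open>G\<^sub>R\<close> is also divisible by \<open>(1 + s)\<^bsup>N - deg R\<^esup>\<close>; the divisors together
  have degree above \<open>N \<ge> deg G\<^sub>R\<close>, whence \<open>G\<^sub>R = 0\<close>, \<open>R\<close> vanishes on \<open>{0..N}\<close>, and \<open>R = 0\<close>.
\<close>

section \<open>Contour integrals of polynomials divided by a power\<close>

lemma has_contour_integral_power_over_power:
  fixes g :: "real \<Rightarrow> complex"
  assumes g: "valid_path g" "pathfinish g = pathstart g" "0 \<notin> path_image g"
  shows "((\<lambda>s. s ^ k / s ^ (x + 1)) has_contour_integral
           (if k = x then 2 * pi * \<i> * winding_number g 0 else 0)) g"
proof (cases "k = x")
  case True
  have "((\<lambda>w. 1 / (w - 0)) has_contour_integral (2 * pi * \<i> * winding_number g 0)) g"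
    by (rule has_contour_integral_winding_number) (use g in auto)
  then show ?thesis
    using True g(3) by (auto intro: has_contour_integral_eq)
next
  case False
  define e where "e = int k - int x"
  have "e \<noteq> 0"
    using False by (simp add: e_def)
  have "((\<lambda>s. s powi (e - 1)) has_contour_integral 0) g"
  proof (rule Cauchy_theorem_primitive[where S = "-{0}" and f = "\<lambda>s. s powi e / of_int e"])
    fix s :: complex
    assume "s \<in> -{0}"
    then show "((\<lambda>s. s powi e / of_int e) has_field_derivative s powi (e - 1)) (at s within -{0})"
      using \<open>e \<noteq> 0\<close> by (auto intro!: derivative_eq_intros)
  qed (use g in auto)
  then have "((\<lambda>s. s ^ k / s ^ (x + 1)) has_contour_integral 0) g"
  proof (rule has_contour_integral_eq)
    fix s
    assume "s \<in> path_image g"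
    then have "s \<noteq> 0"
      using g(3) by auto
    have "s powi (e - 1) = s powi (int k - int (x + 1))"
      by (simp add: e_def algebra_simps)
    also have "\<dots> = s ^ k / s ^ (x + 1)"
      using \<open>s \<noteq> 0\<close> by (simp add: power_int_diff flip: power_int_of_nat)
    finally show "s powi (e - 1) = s ^ k / s ^ (x + 1)" .
  qed
  then show ?thesis
    using False by simp
qed

lemma contour_integral_poly_over_power:
  fixes g :: "real \<Rightarrow> complex" and Q :: "complex poly"
  assumes g: "valid_path g" "pathfinish g = pathstart g" "0 \<notin> path_image g"
  shows "contour_integral g (\<lambda>s. poly Q s / s ^ (x + 1)) = 2 * pi * \<i> * winding_number g 0 * coeff Q x"
proof -
  have "((\<lambda>s. \<Sum>k\<le>degree Q. coeff Q k * (s ^ k / s ^ (x + 1))) has_contour_integral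
          (\<Sum>k\<le>degree Q. coeff Q k * (if k = x then 2 * pi * \<i> * winding_number g 0 else 0))) g"
    by (intro has_contour_integral_sum has_contour_integral_lmul
          has_contour_integral_power_over_power g) auto
  moreover have "(\<Sum>k\<le>degree Q. coeff Q k * (if k = x then 2 * pi * \<i> * winding_number g 0 else 0))
      = 2 * pi * \<i> * winding_number g 0 * coeff Q x"
    by (auto simp: if_distrib sum.delta coeff_eq_0 cong: if_cong)
  moreover have "(\<lambda>s. \<Sum>k\<le>degree Q. coeff Q k * (s ^ k / s ^ (x + 1))) = (\<lambda>s. poly Q s / s ^ (x + 1))"
    by (auto simp: poly_altdef sum_divide_distrib)
  ultimately show ?thesis
    by (metis contour_integral_unique)
qed

lemma map_poly_of_real_mult:
  "map_poly (of_real :: real \<Rightarrow> 'a::{real_algebra_1, comm_ring_1}) (p * q)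
     = map_poly of_real p * map_poly of_real q"
  by (rule poly_eqI) (simp add: coeff_map_poly coeff_mult of_real_sum)

lemma map_poly_of_real_power:
  "map_poly (of_real :: real \<Rightarrow> 'a::{real_algebra_1, comm_ring_1}) (p ^ m) = map_poly of_real p ^ m"
  by (induction m) (simp_all add: map_poly_of_real_mult)

lemma map_poly_of_real_prod:
  "map_poly (of_real :: real \<Rightarrow> 'a::{real_algebra_1, comm_ring_1}) (\<Prod>i\<in>A. f i)
     = (\<Prod>i\<in>A. map_poly of_real (f i))"
  by (induction A rule: infinite_finite_induct) (simp_all add: map_poly_of_real_mult)

section \<open>The Euler operator\<close>

definition euler_op :: "'a::{comm_semiring_1, semiring_no_zero_divisors} poly \<Rightarrow> 'a poly" where
  "euler_op P = pCons 0 (pderiv P)"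

lemma coeff_euler_op: "coeff (euler_op P) k = of_nat k * coeff P k"
  by (cases k) (auto simp: euler_op_def coeff_pCons coeff_pderiv)

lemma coeff_euler_op_iter: "coeff ((euler_op ^^ j) P) k = of_nat k ^ j * coeff P k"
  by (induction j) (auto simp: coeff_euler_op mult.assoc)

lemma euler_op_iter_smult: "(euler_op ^^ j) (smult c P) = smult c ((euler_op ^^ j) P)"
  by (rule poly_eqI) (simp add: coeff_euler_op_iter mult.left_commute)

text \<open>Each application of \<open>euler_op\<close> lowers the order of the root \<open>a\<close> by one and multiplies
  the value of the cofactor at \<open>a\<close> by \<open>a\<close> times that order, a nonzero factor when \<open>a \<noteq> 0\<close>.\<close>

lemma euler_op_iter_linear_power_mult:
  fixes a :: "'a::{idom, ring_char_0}"
  assumes "j \<le> m"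
  shows "\<exists>K c. (euler_op ^^ j) ([:-a, 1:] ^ m * H) = [:-a, 1:] ^ (m - j) * K
            \<and> poly K a = c * poly H a \<and> (a \<noteq> 0 \<longrightarrow> c \<noteq> 0)"
  using assms
proof (induction j)
  case 0
  then show ?case
    by (intro exI[of _ H] exI[of _ 1]) auto
next
  case (Suc j)
  then obtain K c where K: "(euler_op ^^ j) ([:-a, 1:] ^ m * H) = [:-a, 1:] ^ (m - j) * K"
    and Ka: "poly K a = c * poly H a" and c: "a \<noteq> 0 \<longrightarrow> c \<noteq> 0"
    by auto
  obtain t where t: "m - j = Suc t"
    using Suc.prems by (metis Suc_diff_Suc Suc_le_lessD)
  define K' where "K' = [:0, 1:] * (smult (of_nat (Suc t)) K + [:-a, 1:] * pderiv K)"
  have "(euler_op ^^ Suc j) ([:-a, 1:] ^ m * H) = euler_op ([:-a, 1:] ^ Suc t * K)"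
    using K t by simp
  also have "\<dots> = [:-a, 1:] ^ t * K'"
    unfolding euler_op_def K'_def pderiv_mult pderiv_power_Suc
    by (simp add: pderiv_pCons algebra_simps)
  moreover have "m - Suc j = t"
    using t by simp
  ultimately show ?case
    using Ka c of_nat_neq_0[of t, where 'a = 'a]
    by (intro exI[of _ K'] exI[of _ "a * of_nat (Suc t) * c"]) (auto simp: K'_def)
qed

lemma poly_euler_op_iter_linear_power_mult:
  fixes a :: "'a::{idom, ring_char_0}"
  assumes "j < m"
  shows "poly ((euler_op ^^ j) ([:-a, 1:] ^ m * H)) a = 0"
  using euler_op_iter_linear_power_mult[of j m a H] assms by auto

lemma linear_power_dvd_euler_op_iter:
  fixes a :: "'a::{idom, ring_char_0}"
  assumes "j \<le> m"
  shows "[:-a, 1:] ^ (m - j) dvd (euler_op ^^ j) ([:-a, 1:] ^ m * H)"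
  using euler_op_iter_linear_power_mult[of j m a H] assms by auto

lemma linear_power_dvd_if_poly_euler_op_iter_eq_0:
  fixes a :: "'a::{idom, ring_char_0}"
  assumes "a \<noteq> 0" and "\<And>j. j < m \<Longrightarrow> poly ((euler_op ^^ j) G) a = 0"
  shows "[:-a, 1:] ^ m dvd G"
  using assms(2)
proof (induction m)
  case 0
  then show ?case
    by simp
next
  case (Suc m)
  then obtain H where H: "G = [:-a, 1:] ^ m * H"
    by (auto elim: dvdE)
  obtain K c where K: "(euler_op ^^ m) ([:-a, 1:] ^ m * H) = K"
    and Ka: "poly K a = c * poly H a" and "c \<noteq> 0"
    using euler_op_iter_linear_power_mult[of m m a H] assms(1) by auto
  have "poly ((euler_op ^^ m) G) a = 0"
    using Suc.prems by auto
  then have "poly H a = 0"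
    using H K Ka \<open>c \<noteq> 0\<close> by simp
  then have "[:-a, 1:] dvd H"
    by (simp add: poly_eq_0_iff_dvd)
  then show ?case
    unfolding H power_Suc2 by (intro mult_dvd_mono) auto
qed

section \<open>The binomial generating function\<close>

lemma coeff_one_plus_X_power: "coeff ([:1, 1:] ^ N) k = (of_nat (N choose k) :: 'a::comm_semiring_1)"
proof (cases "k \<le> N")
  case True
  then show ?thesis
    by (simp add: coeff_linear_poly_power)
next
  case False
  then show ?thesis
    by (simp add: coeff_eq_0 degree_linear_power binomial_eq_0)
qed

lemma poly_eq_sum_atMost:
  fixes Q :: "'a::comm_semiring_1 poly"
  assumes "degree Q \<le> D"
  shows "poly Q u = (\<Sum>k\<le>D. coeff Q k * u ^ k)"
  unfolding poly_altdef
  by (rule sum.mono_neutral_left) (use assms in \<open>auto simp: coeff_eq_0\<close>)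

text \<open>Written via \<open>euler_op\<close> rather than by its coefficients \<open>R(k) (N choose k)\<close>
   to make its factor \<open>(1 + s)\<^bsup>N - deg R\<^esup>\<close> visible.\<close>

definition binom_genfun :: "nat \<Rightarrow> real poly \<Rightarrow> real poly" where
  "binom_genfun N R = (\<Sum>j\<le>degree R. smult (coeff R j) ((euler_op ^^ j) ([:1, 1:] ^ N)))"

lemma coeff_binom_genfun: "coeff (binom_genfun N R) k = poly R (real k) * real (N choose k)"
  by (simp add: binom_genfun_def coeff_sum coeff_euler_op_iter coeff_one_plus_X_power poly_altdef
      sum_distrib_left algebra_simps)

lemma degree_euler_op_iter_binom_genfun: "degree ((euler_op ^^ j) (binom_genfun N R)) \<le> N"
  by (rule degree_le) (auto simp: coeff_euler_op_iter coeff_binom_genfun)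

lemma one_plus_X_power_dvd_binom_genfun:
  assumes "degree R \<le> d" "d \<le> N"
  shows "[:1, 1:] ^ (N - d) dvd binom_genfun N R"
  unfolding binom_genfun_def
proof (intro dvd_sum dvd_smult)
  fix j
  assume "j \<in> {..degree R}"
  then have "j \<le> d"
    using assms by auto
  have "[:-(-1), 1:] ^ (N - j) dvd (euler_op ^^ j) ([:-(-1), 1:] ^ N * (1 :: real poly))"
    by (rule linear_power_dvd_euler_op_iter) (use \<open>j \<le> d\<close> assms in auto)
  moreover have "[:1::real, 1:] ^ (N - d) dvd [:1, 1:] ^ (N - j)"
    by (rule le_imp_power_dvd) (use \<open>j \<le> d\<close> in auto)
  ultimately show "[:1, 1:] ^ (N - d) dvd (euler_op ^^ j) ([:1::real, 1:] ^ N)"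
    by (auto intro: dvd_trans)
qed

definition odds :: "real \<Rightarrow> real" where
  "odds q = q / (1 - q)"

lemma inj_on_odds: "inj_on odds (-{1})"
proof (rule inj_onI)
  fix q r
  assume "q \<in> -{1}" "r \<in> -{1}" "odds q = odds r"
  then have "q * (1 - r) = r * (1 - q)"
    by (simp add: odds_def frac_eq_eq)
  then show "q = r"
    by (simp add: algebra_simps)
qed

lemma kravchuk_moment_eq_binom_genfun:
  assumes "q < 1"
  shows "(\<Sum>k=0..N. real k ^ j * poly R (real k) * kravchuk_weight N q k)
       = (1 - q) ^ N * poly ((euler_op ^^ j) (binom_genfun N R)) (odds q)"
proof -
  have "(1 - q) ^ N * poly ((euler_op ^^ j) (binom_genfun N R)) (odds q)
     = (\<Sum>k\<le>N. (1 - q) ^ N * (real k ^ j * (poly R (real k) * real (N choose k))) * odds q ^ k)"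
    by (simp add: poly_eq_sum_atMost[OF degree_euler_op_iter_binom_genfun] coeff_euler_op_iter
        coeff_binom_genfun sum_distrib_left mult.assoc)
  also have "\<dots> = (\<Sum>k=0..N. real k ^ j * poly R (real k) * kravchuk_weight N q k)"
    unfolding atLeast0AtMost
  proof (rule sum.cong[OF refl])
    fix k
    assume "k \<in> {..N}"
    then have "(1 - q) ^ N = (1 - q) ^ k * (1 - q) ^ (N - k)"
      by (simp flip: power_add)
    moreover have "(1 - q) ^ k * odds q ^ k = q ^ k"
      using assms by (simp add: odds_def flip: power_mult_distrib)
    ultimately show "(1 - q) ^ N * (real k ^ j * (poly R (real k) * real (N choose k))) * odds q ^ k
        = real k ^ j * poly R (real k) * kravchuk_weight N q k"
      unfolding kravchuk_weight_def by (simp add: algebra_simps)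
  qed
  finally show ?thesis
    by simp
qed

section \<open>Uniqueness of the type II polynomial\<close>

lemma prod_linear_powers_mult_dvd:
  fixes a :: "nat \<Rightarrow> 'a::idom"
  assumes "inj_on a {..<p}" "\<And>i. i < p \<Longrightarrow> a i \<noteq> b"
    and "\<And>i. i < p \<Longrightarrow> [:-a i, 1:] ^ n i dvd G"
    and "[:-b, 1:] ^ m dvd G" and "G \<noteq> 0"
  shows "(\<Prod>i<p. [:-a i, 1:] ^ n i) * [:-b, 1:] ^ m dvd G"
proof -
  have "(\<Prod>i<q. [:-a i, 1:] ^ n i) * [:-b, 1:] ^ m dvd G" if "q \<le> p" for q
    using that
  proof (induction q)
    case 0
    then show ?case
      using assms(4) by simp
  next
    case (Suc q)
    define D where "D = (\<Prod>i<q. [:-a i, 1:] ^ n i) * [:-b, 1:] ^ m"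
    obtain H where H: "G = D * H"
      using Suc by (auto simp: D_def elim: dvdE)
    have "q < p"
      using Suc.prems by simp
    have "a q \<noteq> a i" if "i < q" for i
      using inj_onD[OF assms(1), of q i] that \<open>q < p\<close> by auto
    then have "poly D (a q) \<noteq> 0"
      using assms(2) \<open>q < p\<close> by (auto simp: D_def poly_prod)
    then have "order (a q) D = 0"
      by (rule order_0I)
    have "n q \<le> order (a q) G"
      using assms(3)[OF \<open>q < p\<close>] assms(5) by (simp add: order_divides)
    also have "order (a q) G = order (a q) D + order (a q) H"
      using H assms(5) by (simp add: order_mult)
    finally have "[:-a q, 1:] ^ n q dvd H"
      using \<open>order (a q) D = 0\<close> by (simp add: order_divides)
    then show ?case
      using H by (simp add: D_def algebra_simps)
  qed
  then show ?thesis
    by simp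
qed

lemma binom_genfun_eq_0_if_orthogonal:
  fixes pr :: "nat \<Rightarrow> real"
  assumes pr: "\<forall>i<p. 0 < pr i \<and> pr i < 1" and inj: "inj_on pr {..<p}"
    and deg: "degree R < (\<Sum>i<p. n i)" and nN: "(\<Sum>i<p. n i) \<le> N"
    and ortho: "\<forall>i<p. \<forall>j<n i. (\<Sum>k=0..N. real k ^ j * poly R (real k) * kravchuk_weight N (pr i) k) = 0"
  shows "binom_genfun N R = 0"
proof (rule ccontr)
  define G where "G = binom_genfun N R"
  define a where "a i = odds (pr i)" for i
  assume "binom_genfun N R \<noteq> 0"
  then have "G \<noteq> 0"
    by (simp add: G_def)
  have pos: "a i > 0" if "i < p" for i
    using pr that by (auto simp: a_def odds_def)
  have "inj_on a {..<p}"
    unfolding a_def using pr by (intro comp_inj_on[OF inj, unfolded o_def] inj_on_subset[OF inj_on_odds]) auto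
  moreover have "[:-a i, 1:] ^ n i dvd G" if "i < p" for i
  proof (rule linear_power_dvd_if_poly_euler_op_iter_eq_0)
    show "a i \<noteq> 0"
      using pos[OF that] by simp
    fix j
    assume "j < n i"
    then have "(1 - pr i) ^ N * poly ((euler_op ^^ j) G) (a i) = 0"
      using ortho pr that by (simp add: G_def a_def flip: kravchuk_moment_eq_binom_genfun)
    then show "poly ((euler_op ^^ j) G) (a i) = 0"
      using pr that by auto
  qed
  moreover have "[:-(-1), 1:] ^ (N - degree R) dvd G"
    using one_plus_X_power_dvd_binom_genfun[of R "degree R" N] deg nN by (simp add: G_def)
  ultimately have "(\<Prod>i<p. [:-a i, 1:] ^ n i) * [:-(-1), 1:] ^ (N - degree R) dvd G"
    using pos \<open>G \<noteq> 0\<close> by (intro prod_linear_powers_mult_dvd; force)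
  then have "degree ((\<Prod>i<p. [:-a i, 1:] ^ n i) * [:-(-1), 1:] ^ (N - degree R)) \<le> degree G"
    using \<open>G \<noteq> 0\<close> by (rule dvd_imp_degree_le)
  moreover have "degree ((\<Prod>i<p. [:-a i, 1:] ^ n i) * [:-(-1), 1:] ^ (N - degree R))
      = (\<Sum>i<p. n i) + (N - degree R)"
    by (simp add: degree_mult_eq degree_prod_eq_sum_degree degree_linear_power)
  moreover have "degree G \<le> N"
    using degree_euler_op_iter_binom_genfun[of 0 N R] by (simp add: G_def)
  ultimately show False
    using deg nN by linarith
qed

lemma is_kravchuk_II_unique:
  assumes pr: "\<forall>i<p. 0 < pr i \<and> pr i < 1" and inj: "inj_on pr {..<p}"
    and nN: "(\<Sum>i<p. n i) \<le> N"
    and P: "is_kravchuk_II p pr N n P" and Q: "is_kravchuk_II p pr N n Q"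
  shows "P = Q"
proof (rule poly_eqI_degree_lead_coeff[where n = "\<Sum>i<p. n i" and A = "real ` {..<\<Sum>i<p. n i}"])
  define \<nu> where "\<nu> = (\<Sum>i<p. n i)"
  show "degree P \<le> \<nu>" "degree Q \<le> \<nu>" "coeff P \<nu> = coeff Q \<nu>"
    using P Q by (auto simp: is_kravchuk_II_def \<nu>_def)
  show "card (real ` {..<\<nu>}) \<ge> \<nu>"
    by (simp add: card_image)
  fix z
  assume "z \<in> real ` {..<\<nu>}"
  then obtain k where "k < \<nu>" "z = real k"
    by auto
  have "degree (P - Q) < \<nu>"
  proof -
    have "coeff (P - Q) i = 0" if "i \<ge> \<nu>" for i
      using P Q that by (cases "i = \<nu>") (auto simp: is_kravchuk_II_def \<nu>_def coeff_eq_0)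
    then show ?thesis
      using \<open>k < \<nu>\<close> by (intro le_less_trans[OF degree_le[of "\<nu> - 1"]]) auto
  qed
  then have "binom_genfun N (P - Q) = 0"
    using P Q pr inj nN
    by (intro binom_genfun_eq_0_if_orthogonal) (auto simp: is_kravchuk_II_def \<nu>_def algebra_simps sum_subtractf)
  then have "coeff (binom_genfun N (P - Q)) k = 0"
    by simp
  then show "poly P z = poly Q z"
    using \<open>k < \<nu>\<close> nN \<open>z = real k\<close> by (simp add: coeff_binom_genfun \<nu>_def)
qed

section \<open>An explicit type II polynomial\<close>

definition falling_fact_poly :: "nat \<Rightarrow> real poly" where
  "falling_fact_poly m = (\<Prod>i<m. [:-real i, 1:])"

definition falling_fact_poly_compl :: "nat \<Rightarrow> nat \<Rightarrow> real poly" where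
  "falling_fact_poly_compl N r = (\<Prod>i<r. [:real N - real i, -1:])"

lemma degree_falling_fact_poly: "degree (falling_fact_poly m) = m"
  by (simp add: falling_fact_poly_def degree_prod_eq_sum_degree)

lemma lead_coeff_falling_fact_poly: "lead_coeff (falling_fact_poly m) = 1"
  by (simp add: falling_fact_poly_def lead_coeff_prod)

lemma degree_falling_fact_poly_compl: "degree (falling_fact_poly_compl N r) = r"
  by (simp add: falling_fact_poly_compl_def degree_prod_eq_sum_degree)

lemma lead_coeff_falling_fact_poly_compl: "lead_coeff (falling_fact_poly_compl N r) = (-1) ^ r"
  by (simp add: falling_fact_poly_compl_def lead_coeff_prod)

lemma poly_falling_fact_poly: "poly (falling_fact_poly m) (real k) = (\<Prod>i<m. real k - real i)"
  by (simp add: falling_fact_poly_def poly_prod)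

lemma poly_falling_fact_poly_compl:
  "k \<le> N \<Longrightarrow> poly (falling_fact_poly_compl N r) (real k) = (\<Prod>i<r. real (N - k) - real i)"
  by (simp add: falling_fact_poly_compl_def poly_prod of_nat_diff algebra_simps)

lemma prod_falling_mult_fact: "m \<le> k \<Longrightarrow> (\<Prod>i<m. real k - real i) * fact (k - m) = fact k"
proof (induction m)
  case 0
  then show ?case
    by simp
next
  case (Suc m)
  then have "(real k - real m) * fact (k - Suc m) = (fact (k - m) :: real)"
    by (simp add: fact_reduce of_nat_diff)
  then show ?case
    using Suc by (simp add: mult.assoc)
qed

lemma prod_falling_eq_0: "k < m \<Longrightarrow> (\<Prod>i<m. real k - real i) = 0"
  by (rule prod_zero) (auto intro: bexI[of _ k])

lemma prod_falling_mult_prod_falling: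
  assumes "k \<le> N" "m \<le> k" "m \<le> \<nu>" "\<nu> \<le> N"
  shows "(\<Prod>i<m. real k - real i) * (\<Prod>i<\<nu> - m. real (N - k) - real i)
       = fact k * fact (N - k) / fact (N - \<nu>) * real ((N - \<nu>) choose (k - m))"
proof (cases "k - m \<le> N - \<nu>")
  case True
  define M where "M = N - \<nu>"
  have "\<nu> - m \<le> N - k" "N - k - (\<nu> - m) = M - (k - m)"
    using True assms by (auto simp: M_def)
  then have A: "(\<Prod>i<\<nu> - m. real (N - k) - real i) = fact (N - k) / fact (M - (k - m))"
    using prod_falling_mult_fact[of "\<nu> - m" "N - k"] by (simp add: field_simps del: of_nat_diff)
  have B: "(\<Prod>i<m. real k - real i) = fact k / fact (k - m)"
    using prod_falling_mult_fact[OF assms(2)] by (simp add: field_simps)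
  have C: "real (M choose (k - m)) = fact M / (fact (k - m) * fact (M - (k - m)))"
    using True by (simp add: binomial_fact M_def)
  show ?thesis
    unfolding A B M_def[symmetric] C by (simp add: field_simps)
next
  case False
  then have "N - k < \<nu> - m"
    using assms by linarith
  then show ?thesis
    using False by (simp add: prod_falling_eq_0 binomial_eq_0)
qed

definition odds_root_poly :: "nat \<Rightarrow> (nat \<Rightarrow> real) \<Rightarrow> (nat \<Rightarrow> nat) \<Rightarrow> real poly" where
  "odds_root_poly p pr n = (\<Prod>j<p. [:-odds (pr j), 1:] ^ n j)"

definition kravchuk_gen_poly :: "nat \<Rightarrow> (nat \<Rightarrow> real) \<Rightarrow> nat \<Rightarrow> (nat \<Rightarrow> nat) \<Rightarrow> real poly" where
  "kravchuk_gen_poly p pr N n = odds_root_poly p pr n * [:1, 1:] ^ (N - (\<Sum>i<p. n i))"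

text \<open>Chosen so that on \<open>{0..N}\<close> its values are, up to the factor \<open>k! (N-k)! / (N-|n|)!\<close>, the
  coefficients of \<open>kravchuk_gen_poly\<close>, while degree and leading coefficient stay visible.\<close>

definition kravchuk_II_explicit :: "nat \<Rightarrow> (nat \<Rightarrow> real) \<Rightarrow> nat \<Rightarrow> (nat \<Rightarrow> nat) \<Rightarrow> real poly" where
  "kravchuk_II_explicit p pr N n = smult (\<Prod>j<p. (1 - pr j) ^ n j) (\<Sum>m\<le>(\<Sum>i<p. n i).
      smult (coeff (odds_root_poly p pr n) m)
        (falling_fact_poly m * falling_fact_poly_compl N ((\<Sum>i<p. n i) - m)))"

lemma degree_odds_root_poly: "degree (odds_root_poly p pr n) = (\<Sum>i<p. n i)"
  by (simp add: odds_root_poly_def degree_prod_eq_sum_degree degree_linear_power)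

lemma degree_kravchuk_gen_poly:
  assumes "(\<Sum>i<p. n i) \<le> N"
  shows "degree (kravchuk_gen_poly p pr N n) = N"
proof -
  have "odds_root_poly p pr n \<noteq> 0"
    by (simp add: odds_root_poly_def)
  then show ?thesis
    using assms by (simp add: kravchuk_gen_poly_def degree_mult_eq degree_linear_power degree_odds_root_poly)
qed

lemma poly_kravchuk_II_explicit:
  assumes "k \<le> N" "(\<Sum>i<p. n i) \<le> N"
  shows "poly (kravchuk_II_explicit p pr N n) (real k)
       = (\<Prod>j<p. (1 - pr j) ^ n j) / fact (N - (\<Sum>i<p. n i)) * fact k * fact (N - k)
           * coeff (kravchuk_gen_poly p pr N n) k"
proof -
  define \<nu> where "\<nu> = (\<Sum>i<p. n i)"
  define e where "e m = coeff (odds_root_poly p pr n) m" for m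
  define c :: real where "c = fact k * fact (N - k) / fact (N - \<nu>)"
  have e0: "e m = 0" if "m > \<nu>" for m
    using that by (simp add: e_def coeff_eq_0 degree_odds_root_poly \<nu>_def)
  have "(\<Sum>m\<le>\<nu>. e m * ((\<Prod>i<m. real k - real i) * (\<Prod>i<\<nu> - m. real (N - k) - real i)))
      = (\<Sum>m\<in>{..\<nu>} \<inter> {..k}. e m * ((\<Prod>i<m. real k - real i) * (\<Prod>i<\<nu> - m. real (N - k) - real i)))"
    by (rule sum.mono_neutral_right) (auto simp: prod_falling_eq_0)
  also have "\<dots> = (\<Sum>m\<in>{..\<nu>} \<inter> {..k}. c * (e m * real ((N - \<nu>) choose (k - m))))"
    by (intro sum.cong refl, subst prod_falling_mult_prod_falling) (use assms in \<open>auto simp: c_def \<nu>_def\<close>)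
  also have "\<dots> = (\<Sum>m\<le>k. c * (e m * real ((N - \<nu>) choose (k - m))))"
    by (rule sum.mono_neutral_left) (auto simp: e0)
  also have "\<dots> = c * coeff (kravchuk_gen_poly p pr N n) k"
    by (simp add: kravchuk_gen_poly_def coeff_mult coeff_one_plus_X_power e_def sum_distrib_left \<nu>_def)
  finally show ?thesis
    using assms
    by (simp add: kravchuk_II_explicit_def poly_sum poly_falling_fact_poly poly_falling_fact_poly_compl
        c_def e_def \<nu>_def)
qed

lemma degree_kravchuk_II_explicit: "degree (kravchuk_II_explicit p pr N n) \<le> (\<Sum>i<p. n i)"
  unfolding kravchuk_II_explicit_def
  by (intro order.trans[OF degree_smult_le] degree_sum_le order.trans[OF degree_smult_le])
     (auto intro!: order.trans[OF degree_mult_le]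
       simp: degree_falling_fact_poly degree_falling_fact_poly_compl)

lemma coeff_kravchuk_II_explicit:
  assumes "\<forall>j<p. pr j < 1"
  shows "coeff (kravchuk_II_explicit p pr N n) (\<Sum>i<p. n i) = 1"
proof -
  define \<nu> where "\<nu> = (\<Sum>i<p. n i)"
  have top: "coeff (falling_fact_poly m * falling_fact_poly_compl N (\<nu> - m)) \<nu> = (-1) ^ (\<nu> - m)"
    if "m \<le> \<nu>" for m
    using that coeff_mult_degree_sum[of "falling_fact_poly m" "falling_fact_poly_compl N (\<nu> - m)"]
    by (simp add: degree_falling_fact_poly degree_falling_fact_poly_compl
        lead_coeff_falling_fact_poly[unfolded degree_falling_fact_poly]
        lead_coeff_falling_fact_poly_compl[unfolded degree_falling_fact_poly_compl])
  have sign: "(-1::real) ^ (\<nu> - m) = (-1) ^ \<nu> * (-1) ^ m" if "m \<le> \<nu>" for m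
    using that by (simp add: power_diff minus_one_power_iff)
  have "coeff (kravchuk_II_explicit p pr N n) \<nu>
      = (\<Prod>j<p. (1 - pr j) ^ n j) * (\<Sum>m\<le>\<nu>. coeff (odds_root_poly p pr n) m * (-1) ^ (\<nu> - m))"
    by (simp add: kravchuk_II_explicit_def coeff_sum top \<nu>_def[symmetric])
  also have "(\<Sum>m\<le>\<nu>. coeff (odds_root_poly p pr n) m * (-1) ^ (\<nu> - m))
      = (-1) ^ \<nu> * poly (odds_root_poly p pr n) (-1)"
    unfolding poly_eq_sum_atMost[OF eq_imp_le[OF degree_odds_root_poly]] \<nu>_def sum_distrib_left
    by (intro sum.cong refl) (auto simp: sign[unfolded \<nu>_def] mult_ac)
  also have "(\<Prod>j<p. (1 - pr j) ^ n j) * ((-1) ^ \<nu> * poly (odds_root_poly p pr n) (-1))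
      = (\<Prod>j<p. ((1 - pr j) * (-1) * (-1 - odds (pr j))) ^ n j)"
    unfolding odds_root_poly_def poly_prod \<nu>_def power_sum power_mult_distrib prod.distrib
    by (simp add: poly_power) (intro disjI2 prod.cong refl arg_cong[where f = "\<lambda>z. z ^ _"]; linarith)
  also have "\<dots> = 1"
  proof (rule prod.neutral, intro ballI)
    fix j
    assume "j \<in> {..<p}"
    then have "1 - pr j \<noteq> 0"
      using assms by force
    then have "(1 - pr j) * (-1) * (-1 - odds (pr j)) = 1"
      by (simp add: odds_def field_simps)
    then show "((1 - pr j) * (-1) * (-1 - odds (pr j))) ^ n j = 1"
      by simp
  qed
  finally show ?thesis
    by (simp add: \<nu>_def)
qed

lemma binom_genfun_kravchuk_II_explicit:
  assumes "(\<Sum>i<p. n i) \<le> N"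
  shows "binom_genfun N (kravchuk_II_explicit p pr N n)
       = smult ((\<Prod>j<p. (1 - pr j) ^ n j) * fact N / fact (N - (\<Sum>i<p. n i)))
           (kravchuk_gen_poly p pr N n)"
proof (rule poly_eqI)
  fix k
  show "coeff (binom_genfun N (kravchuk_II_explicit p pr N n)) k
      = coeff (smult ((\<Prod>j<p. (1 - pr j) ^ n j) * fact N / fact (N - (\<Sum>i<p. n i)))
          (kravchuk_gen_poly p pr N n)) k"
  proof (cases "k \<le> N")
    case True
    then have "real (N choose k) = fact N / (fact k * fact (N - k))"
      by (simp add: binomial_fact)
    then show ?thesis
      using True assms by (simp add: coeff_binom_genfun poly_kravchuk_II_explicit field_simps)
  next
    case False
    then show ?thesis
      using assms by (simp add: coeff_binom_genfun coeff_eq_0 degree_kravchuk_gen_poly)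
  qed
qed

lemma is_kravchuk_II_explicit:
  assumes pr: "\<forall>i<p. 0 < pr i \<and> pr i < 1" and nN: "(\<Sum>i<p. n i) \<le> N"
  shows "is_kravchuk_II p pr N n (kravchuk_II_explicit p pr N n)"
  unfolding is_kravchuk_II_def
proof (intro conjI allI impI)
  define P where "P = kravchuk_II_explicit p pr N n"
  have "coeff P (\<Sum>i<p. n i) = 1"
    using coeff_kravchuk_II_explicit pr by (simp add: P_def)
  moreover from this have "degree P = (\<Sum>i<p. n i)"
    using degree_kravchuk_II_explicit[of p pr N n] le_degree[of P "\<Sum>i<p. n i"] by (simp add: P_def)
  ultimately show "degree P = (\<Sum>i<p. n i)" "lead_coeff P = 1"
    by simp_all
  fix i j
  assume "i < p" "j < n i"
  have "odds_root_poly p pr n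
      = [:-odds (pr i), 1:] ^ n i * (\<Prod>l\<in>{..<p} - {i}. [:-odds (pr l), 1:] ^ n l)"
    unfolding odds_root_poly_def using \<open>i < p\<close> by (subst prod.remove[of _ i]) auto
  then obtain H where H: "kravchuk_gen_poly p pr N n = [:-odds (pr i), 1:] ^ n i * H"
    by (auto simp: kravchuk_gen_poly_def mult.assoc)
  have "(\<Sum>k=0..N. real k ^ j * poly P (real k) * kravchuk_weight N (pr i) k)
      = (1 - pr i) ^ N * poly ((euler_op ^^ j) (binom_genfun N P)) (odds (pr i))"
    using pr \<open>i < p\<close> by (intro kravchuk_moment_eq_binom_genfun) auto
  also have "\<dots> = 0"
    unfolding P_def binom_genfun_kravchuk_II_explicit[OF nN] euler_op_iter_smult H
    by (simp add: poly_euler_op_iter_linear_power_mult[OF \<open>j < n i\<close>])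
  finally show "(\<Sum>k=0..N. real k ^ j * poly P (real k) * kravchuk_weight N (pr i) k) = 0" .
qed

lemma kravchuk_II_eq_explicit:
  assumes "\<forall>i<p. 0 < pr i \<and> pr i < 1" "inj_on pr {..<p}" "(\<Sum>i<p. n i) \<le> N"
  shows "kravchuk_II p pr N n = kravchuk_II_explicit p pr N n"
  unfolding kravchuk_II_def
  using is_kravchuk_II_explicit is_kravchuk_II_unique assms by (intro the_equality) blast+

section \<open>The contour integral representation\<close>

lemma poly_map_kravchuk_gen_poly:
  "poly (map_poly complex_of_real (kravchuk_gen_poly p pr N n)) s
     = (1 + s) ^ (N - (\<Sum>i<p. n i)) * (\<Prod>j<p. (s - complex_of_real (pr j / (1 - pr j))) ^ n j)"
  by (simp add: kravchuk_gen_poly_def odds_root_poly_def map_poly_of_real_mult map_poly_of_real_power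
      map_poly_of_real_prod map_poly_pCons poly_prod poly_power odds_def)

lemma contour_integral_kravchuk_gen_poly:
  fixes g :: "real \<Rightarrow> complex"
  assumes "valid_path g" "pathfinish g = pathstart g" "0 \<notin> path_image g" "winding_number g 0 = 1"
  shows "contour_integral g (\<lambda>s. (1 + s) ^ (N - (\<Sum>i<p. n i)) / s ^ (x + 1)
           * (\<Prod>j<p. (s - complex_of_real (pr j / (1 - pr j))) ^ n j))
       = 2 * pi * \<i> * complex_of_real (coeff (kravchuk_gen_poly p pr N n) x)"
proof -
  have "contour_integral g (\<lambda>s. (1 + s) ^ (N - (\<Sum>i<p. n i)) / s ^ (x + 1)
          * (\<Prod>j<p. (s - complex_of_real (pr j / (1 - pr j))) ^ n j))
      = contour_integral g (\<lambda>s. poly (map_poly complex_of_real (kravchuk_gen_poly p pr N n)) s / s ^ (x + 1))"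
    by (simp add: poly_map_kravchuk_gen_poly)
  also have "\<dots> = 2 * pi * \<i> * complex_of_real (coeff (kravchuk_gen_poly p pr N n) x)"
    using contour_integral_poly_over_power[OF assms(1-3)] assms(4) by (simp add: coeff_map_poly)
  finally show ?thesis .
qed

theorem mainTheorem15:
  fixes p N :: nat and pr :: "nat \<Rightarrow> real" and n :: "nat \<Rightarrow> nat"
    and g :: "real \<Rightarrow> complex" and x :: nat
  assumes "\<forall>i<p. 0 < pr i \<and> pr i < 1"
    and "inj_on pr {..<p}"
    and "(\<Sum>i<p. n i) \<le> N"
    and "valid_path g" and "simple_path g" and "pathfinish g = pathstart g"
    and "0 \<notin> path_image g" and "winding_number g 0 = 1"
    and "x \<le> N"
  shows "complex_of_real (poly (kravchuk_II p pr N n) (real x)) =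
    complex_of_real ((\<Prod>j<p. (1 - pr j) ^ n j) / fact (N - (\<Sum>i<p. n i)))
    * Gamma (of_nat x + 1) * Gamma (of_nat (N - x) + 1)
    * (contour_integral g (\<lambda>s. (1 + s) ^ (N - (\<Sum>i<p. n i)) / s ^ (x + 1)
          * (\<Prod>j<p. (s - complex_of_real (pr j / (1 - pr j))) ^ n j))
       / (2 * complex_of_real pi * \<i>))"
proof -
  have Gamma: "Gamma (of_nat x + 1) = (fact x :: complex)"
    "Gamma (of_nat (N - x) + 1) = (fact (N - x) :: complex)"
    using Gamma_fact by (simp_all add: add.commute)
  have poly_value: "poly (kravchuk_II p pr N n) (real x)
      = (\<Prod>j<p. (1 - pr j) ^ n j) / fact (N - (\<Sum>i<p. n i)) * fact x * fact (N - x)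
          * coeff (kravchuk_gen_poly p pr N n) x"
    using assms by (simp add: kravchuk_II_eq_explicit poly_kravchuk_II_explicit)
  show ?thesis
    unfolding contour_integral_kravchuk_gen_poly[OF assms(4,6,7,8)] Gamma poly_value
    by (simp add: field_simps)
qed

end
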